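(* $m_4(5)\geq 6$. Specifically, let $X_0,X_1,X_2$ be pairwise disjoint copies of $\{0,1,2,3,4\}$, let $\mathcal P_j$ be the copy in $X_j$ of the pentagon $\mathcal P=\{\{i,i+1\}: i\in\mathbb Z_5\}$ and $\mathcal R_j$ the copy in $X_j$ of $\mathcal R=\{\{i,i+1,i+3\}: i\in\mathbb Z_5\}$ (indices mod 5). Let \[ \mathcal H=(\mathcal P_0\times\mathcal R_1)\cup(\mathcal P_1\times\mathcal R_2)\cup(\mathcal P_2\times\mathcal R_0), \] where $\mathcal P_a\times\mathcal R_b=\{P\cup R: P\in\mathcal P_a, R\in\mathcal R_b\}$. Then $\mathcal H$ is a $5$-uniform intersecting family with $|\mathcal H|=75$ and $|\{H\in\mathcal H: H\cap Y=\emptyset\}|\ge 6$ for every $4$-set $Y\subset X_0\cup X_1\cup X_2$; moreover $\tau(\mathcal H)=5$.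
   Context: A family is intersecting if any two members intersect; $\tau$ is the minimum size of a set meeting all members. $m_j(k)$ is the maximum of $\gamma_j(\mathcal F)=\min_{|S|=j}|\{F\in\mathcal F:F\cap S=\emptyset\}|$ over all intersecting $k$-uniform families $\mathcal F$ (on any finite ground set) with $\tau(\mathcal F)=k$. *)

theory Defs
  imports Main "HOL-Library.Extended_Nat"
begin

text \<open>Families are sets of sets; ground elements are natural numbers
(any finite ground set embeds into the naturals).\<close>

definition intersecting :: "'a set set \<Rightarrow> bool" where
  "intersecting F \<longleftrightarrow> (\<forall>A\<in>F. \<forall>B\<in>F. A \<inter> B \<noteq> {})"

definition uniform :: "nat \<Rightarrow> 'a set set \<Rightarrow> bool" where
  "uniform k F \<longleftrightarrow> (\<forall>A\<in>F. finite A \<and> card A = k)"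

definition tau :: "'a set set \<Rightarrow> nat" where
  "tau F = (LEAST t. \<exists>S. finite S \<and> card S = t \<and> (\<forall>A\<in>F. A \<inter> S \<noteq> {}))"

definition avoid :: "'a set set \<Rightarrow> 'a set \<Rightarrow> nat" where
  "avoid F S = card {A\<in>F. A \<inter> S = {}}"

definition gamma :: "nat \<Rightarrow> 'a set set \<Rightarrow> nat" where
  "gamma j F = Inf {avoid F S | S. finite S \<and> card S = j}"

definition m :: "nat \<Rightarrow> nat \<Rightarrow> enat" where
  "m j k = (SUP F \<in> {F :: nat set set. finite F \<and> uniform k F \<and> intersecting F \<and> tau F = k}.
              enat (gamma j F))"

text \<open>X_j is encoded as {5j,...,5j+4}; copy of i in X_j is 5j+i.\<close>
definition copy :: "nat \<Rightarrow> nat set \<Rightarrow> nat set" where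
  "copy j A = (\<lambda>i. 5 * j + i) ` A"

definition X :: "nat \<Rightarrow> nat set" where
  "X j = copy j {0..<5}"

definition Pent :: "nat set set" where
  "Pent = {{i, (i + 1) mod 5} | i. i < 5}"

definition Rfam :: "nat set set" where
  "Rfam = {{i, (i + 1) mod 5, (i + 3) mod 5} | i. i < 5}"

definition Pc :: "nat \<Rightarrow> nat set set" where
  "Pc j = copy j ` Pent"

definition Rc :: "nat \<Rightarrow> nat set set" where
  "Rc j = copy j ` Rfam"

definition prodfam :: "'a set set \<Rightarrow> 'a set set \<Rightarrow> 'a set set" where
  "prodfam A B = {P \<union> R | P R. P \<in> A \<and> R \<in> B}"

definition Hfam :: "nat set set" where
  "Hfam = prodfam (Pc 0) (Rc 1) \<union> prodfam (Pc 1) (Rc 2) \<union> prodfam (Pc 2) (Rc 0)"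

end

theory Submission imports Defs begin

text \<open>Write \<open>H = P \<union> R\<close> for the members of a block \<open>\<P>\<^sub>a \<times> \<R>\<^sub>b\<close>. Since \<open>P\<close> and \<open>R\<close> live
on disjoint parts of the ground set, \<open>H\<close> avoids a set \<open>Y\<close> iff both \<open>P\<close> and \<open>R\<close> do, so the
number of members of \<open>\<H>\<close> avoiding \<open>Y\<close> is \<open>\<Sum>\<^sub>a p(B\<^sub>a) r(B\<^sub>a\<^sub>+\<^sub>1)\<close>, where \<open>B\<^sub>j\<close> is the trace of
\<open>Y\<close> on \<open>X\<^sub>j\<close> and \<open>p\<close>, \<open>r\<close> count the pentagon edges and the triples of \<open>\<R>\<close> missing a subset
of \<open>\<int>\<^sub>5\<close>. The triple \<open>(|B|, p(B), r(B))\<close> takes only eight values, and checking them shows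
that the sum is at least 6 whenever \<open>|B\<^sub>0| + |B\<^sub>1| + |B\<^sub>2| \<le> 4\<close>. In particular no set of at
most four points covers \<open>\<H>\<close>, while \<open>{0,1} \<union> {0,1,3}\<close> (in \<open>X\<^sub>0\<close> and \<open>X\<^sub>1\<close>) does, as every
edge meets every triple of \<open>\<R>\<close> and \<open>\<R>\<close> is intersecting.\<close>

lemma avoid_empty [simp]: "avoid F {} = card F"
  by (simp add: avoid_def)

lemma avoid_eq_0_iff: "finite F \<Longrightarrow> avoid F S = 0 \<longleftrightarrow> (\<forall>A\<in>F. A \<inter> S \<noteq> {})"
  by (auto simp: avoid_def)

lemma avoid_Un_disjoint:
  "finite F \<Longrightarrow> finite G \<Longrightarrow> F \<inter> G = {} \<Longrightarrow> avoid (F \<union> G) Y = avoid F Y + avoid G Y"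
  unfolding avoid_def by (subst card_Un_disjoint[symmetric]) (auto intro: arg_cong[where f = card])

lemma avoid_image:
  assumes "inj_on f I"
  shows "avoid (f ` I) Y = card {i \<in> I. f i \<inter> Y = {}}"
proof -
  have "{A \<in> f ` I. A \<inter> Y = {}} = f ` {i \<in> I. f i \<inter> Y = {}}" by auto
  moreover have "inj_on f {i \<in> I. f i \<inter> Y = {}}" using assms by (rule inj_on_subset) auto
  ultimately show ?thesis unfolding avoid_def by (simp add: card_image)
qed

lemma tau_eqI:
  assumes "finite S" "card S = k" "\<forall>A\<in>F. A \<inter> S \<noteq> {}"
    and "\<And>S. finite S \<Longrightarrow> card S < k \<Longrightarrow> \<exists>A\<in>F. A \<inter> S = {}"
  shows "tau F = k"
  unfolding tau_def
proof (rule Least_equality)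
  show "\<exists>S. finite S \<and> card S = k \<and> (\<forall>A\<in>F. A \<inter> S \<noteq> {})" using assms(1-3) by blast
next
  fix t assume "\<exists>S. finite S \<and> card S = t \<and> (\<forall>A\<in>F. A \<inter> S \<noteq> {})"
  then show "k \<le> t" using assms(4) by (meson not_le)
qed

lemma gamma_geI:
  fixes F :: "nat set set"
  assumes "\<And>S. finite S \<Longrightarrow> card S = j \<Longrightarrow> c \<le> avoid F S"
  shows "c \<le> gamma j F"
  unfolding gamma_def
proof (rule cInf_greatest)
  have "finite {..<j} \<and> card {..<j} = j" by simp
  then show "{avoid F S |S. finite S \<and> card S = j} \<noteq> {}" by blast
qed (use assms in blast)

lemma gamma_le_m:
  fixes F :: "nat set set"
  assumes "finite F" "uniform k F" "intersecting F" "tau F = k"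
  shows "enat (gamma j F) \<le> m j k"
  unfolding m_def using assms by (intro SUP_upper) simp

lemma prodfam_image: "prodfam A C = (\<lambda>(P, R). P \<union> R) ` (A \<times> C)"
  by (auto simp: prodfam_def)

lemma finite_prodfam: "finite A \<Longrightarrow> finite C \<Longrightarrow> finite (prodfam A C)"
  by (simp add: prodfam_image)

lemma card_prodfam:
  assumes "finite A" "finite C" "\<forall>P\<in>A. P \<subseteq> U" "\<forall>R\<in>C. R \<subseteq> W" "U \<inter> W = {}"
  shows "card (prodfam A C) = card A * card C"
proof -
  have "inj_on (\<lambda>(P, R). P \<union> R) (A \<times> C)"
  proof (rule inj_onI, clarify)
    fix P R P' R' assume "P \<in> A" "R \<in> C" "P' \<in> A" "R' \<in> C" "P \<union> R = P' \<union> R'"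
    with assms(3-5) show "P = P' \<and> R = R'" by blast
  qed
  then show ?thesis by (simp add: prodfam_image card_image card_cartesian_product)
qed

lemma uniform_prodfam:
  assumes "uniform k A" "uniform l C" "\<forall>P\<in>A. P \<subseteq> U" "\<forall>R\<in>C. R \<subseteq> W" "U \<inter> W = {}"
  shows "uniform (k + l) (prodfam A C)"
  unfolding uniform_def prodfam_def
proof clarify
  fix P R assume "P \<in> A" "R \<in> C"
  with assms(3-5) have "P \<inter> R = {}" by blast
  moreover from \<open>P \<in> A\<close> \<open>R \<in> C\<close> assms(1,2) have "finite P" "finite R" "card P = k" "card R = l"
    by (auto simp: uniform_def)
  ultimately
  show "finite (P \<union> R) \<and> card (P \<union> R) = k + l" by (simp add: card_Un_disjoint)
qed

lemma avoid_prodfam: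
  assumes "finite A" "finite C" "\<forall>P\<in>A. P \<subseteq> U" "\<forall>R\<in>C. R \<subseteq> W" "U \<inter> W = {}"
  shows "avoid (prodfam A C) Y = avoid A Y * avoid C Y"
proof -
  have "{H \<in> prodfam A C. H \<inter> Y = {}} = prodfam {P \<in> A. P \<inter> Y = {}} {R \<in> C. R \<inter> Y = {}}"
    by (auto simp: prodfam_def)
  moreover have "card \<dots> = avoid A Y * avoid C Y"
    unfolding avoid_def by (rule card_prodfam[where U = U and W = W]) (use assms in auto)
  ultimately show ?thesis by (simp add: avoid_def)
qed

lemma prodfam_members_meet:
  assumes "H \<in> prodfam A C" "H' \<in> prodfam A' C'"
    and "(\<forall>R\<in>C. \<forall>R'\<in>C'. R \<inter> R' \<noteq> {}) \<or> (\<forall>P'\<in>A'. \<forall>R\<in>C. P' \<inter> R \<noteq> {}) \<or> (\<forall>P\<in>A. \<forall>R'\<in>C'. P \<inter> R' \<noteq> {})"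
  shows "H \<inter> H' \<noteq> {}"
  using assms unfolding prodfam_def by blast

definition pent_edge :: "nat \<Rightarrow> nat set" where
  "pent_edge i = {i, (i + 1) mod 5}"

definition rtriple :: "nat \<Rightarrow> nat set" where
  "rtriple i = {i, (i + 1) mod 5, (i + 3) mod 5}"

lemma less_5_cases: "(i::nat) < 5 \<longleftrightarrow> i = 0 \<or> i = 1 \<or> i = 2 \<or> i = 3 \<or> i = 4"
  by auto

lemma Pent_eq: "Pent = pent_edge ` {..<5}"
  unfolding Pent_def pent_edge_def by auto

lemma Rfam_eq: "Rfam = rtriple ` {..<5}"
  unfolding Rfam_def rtriple_def by auto

lemma inj_on_pent_edge: "inj_on pent_edge {..<5}"
proof (rule inj_onI)
  fix i j :: nat assume "i \<in> {..<5}" "j \<in> {..<5}" "pent_edge i = pent_edge j"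
  then have "i < 5" "j < 5" "i \<in> pent_edge j" "(i + 1) mod 5 \<in> pent_edge j"
    unfolding pent_edge_def by auto
  then show "i = j" unfolding less_5_cases by (elim disjE) (simp_all add: pent_edge_def)
qed

lemma inj_on_rtriple: "inj_on rtriple {..<5}"
proof (rule inj_onI)
  fix i j :: nat assume "i \<in> {..<5}" "j \<in> {..<5}" "rtriple i = rtriple j"
  then have "i < 5" "j < 5" "i \<in> rtriple j" "(i + 1) mod 5 \<in> rtriple j" "(i + 3) mod 5 \<in> rtriple j"
    unfolding rtriple_def by auto
  then show "i = j" unfolding less_5_cases by (elim disjE) (simp_all add: rtriple_def)
qed

lemma pent_edge_Int_rtriple: "i < 5 \<Longrightarrow> k < 5 \<Longrightarrow> pent_edge i \<inter> rtriple k \<noteq> {}"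
  unfolding less_5_cases by (elim disjE) (simp_all add: pent_edge_def rtriple_def)

lemma rtriple_Int_rtriple: "i < 5 \<Longrightarrow> k < 5 \<Longrightarrow> rtriple i \<inter> rtriple k \<noteq> {}"
  unfolding less_5_cases by (elim disjE) (simp_all add: rtriple_def)

lemma uniform_Pent: "uniform 2 Pent"
  unfolding uniform_def Pent_eq by (auto simp: pent_edge_def less_5_cases)

lemma uniform_Rfam: "uniform 3 Rfam"
  unfolding uniform_def Rfam_eq by (auto simp: rtriple_def less_5_cases)

lemma Pent_subset: "P \<in> Pent \<Longrightarrow> P \<subseteq> {..<5}"
  unfolding Pent_eq pent_edge_def by auto

lemma Rfam_subset: "R \<in> Rfam \<Longrightarrow> R \<subseteq> {..<5}"
  unfolding Rfam_eq rtriple_def by auto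

lemma card_Pent: "card Pent = 5"
  unfolding Pent_eq by (simp add: card_image inj_on_pent_edge)

lemma card_Rfam: "card Rfam = 5"
  unfolding Rfam_eq by (simp add: card_image inj_on_rtriple)

definition trace :: "nat \<Rightarrow> nat set \<Rightarrow> nat set" where
  "trace j Y = {i. i < 5 \<and> 5 * j + i \<in> Y}"

lemma inj_copy: "inj (copy j)"
  unfolding inj_def copy_def by (simp add: inj_image_eq_iff inj_on_def)

lemma copy_Int: "copy j A \<inter> copy j B = copy j (A \<inter> B)"
  unfolding copy_def by (simp add: image_Int inj_on_def)

lemma card_copy [simp]: "card (copy j A) = card A"
  unfolding copy_def by (simp add: card_image inj_on_def)

lemma copy_eq_empty_iff [simp]: "copy j A = {} \<longleftrightarrow> A = {}"
  unfolding copy_def by simp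

lemma uniform_copy: "uniform k F \<Longrightarrow> uniform k (copy j ` F)"
  unfolding uniform_def copy_def by (auto simp: card_image inj_on_def)

lemma copy_subset_X: "A \<subseteq> {..<5} \<Longrightarrow> copy j A \<subseteq> X j"
  unfolding X_def copy_def by auto

lemma X_disjoint: "a \<noteq> b \<Longrightarrow> X a \<inter> X b = {}"
  unfolding X_def copy_def by auto

lemma avoid_copy:
  assumes "\<forall>A\<in>F. A \<subseteq> {..<5}"
  shows "avoid (copy j ` F) Y = avoid F (trace j Y)"
proof -
  have "copy j A \<inter> Y = {} \<longleftrightarrow> A \<inter> trace j Y = {}" if "A \<in> F" for A
    using assms that unfolding copy_def trace_def by auto
  then have "{A \<in> F. copy j A \<inter> Y = {}} = {A \<in> F. A \<inter> trace j Y = {}}" by blast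
  moreover have "avoid (copy j ` F) Y = card {A \<in> F. copy j A \<inter> Y = {}}"
    by (rule avoid_image[OF inj_on_subset[OF inj_copy]]) simp
  ultimately show ?thesis by (simp add: avoid_def)
qed

lemma card_traces_le:
  assumes "finite Y"
  shows "card (trace 0 Y) + card (trace 1 Y) + card (trace 2 Y) \<le> card Y"
proof -
  have traces: "trace j Y \<subseteq> {..<5}" for j unfolding trace_def by auto
  then have in_X: "copy j (trace j Y) \<subseteq> X j" for j by (rule copy_subset_X)
  have "finite (copy j (trace j Y))" for j unfolding copy_def trace_def by simp
  moreover have "copy 0 (trace 0 Y) \<inter> copy 1 (trace 1 Y) = {}"
    "(copy 0 (trace 0 Y) \<union> copy 1 (trace 1 Y)) \<inter> copy 2 (trace 2 Y) = {}"
    using in_X[of 0] in_X[of 1] in_X[of 2] X_disjoint[of 0 1] X_disjoint[of 0 2] X_disjoint[of 1 2]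
    by auto
  ultimately have "card (copy 0 (trace 0 Y) \<union> copy 1 (trace 1 Y) \<union> copy 2 (trace 2 Y))
      = card (trace 0 Y) + card (trace 1 Y) + card (trace 2 Y)"
    by (simp add: card_Un_disjoint)
  moreover have "copy 0 (trace 0 Y) \<union> copy 1 (trace 1 Y) \<union> copy 2 (trace 2 Y) \<subseteq> Y"
    unfolding copy_def trace_def by auto
  ultimately show ?thesis using card_mono[OF assms] by metis
qed

lemma Pc_subset_X: "P \<in> Pc j \<Longrightarrow> P \<subseteq> X j"
  unfolding Pc_def using Pent_subset copy_subset_X by auto

lemma Rc_subset_X: "R \<in> Rc j \<Longrightarrow> R \<subseteq> X j"
  unfolding Rc_def using Rfam_subset copy_subset_X by auto

lemma uniform_Pc: "uniform 2 (Pc j)"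
  unfolding Pc_def by (rule uniform_copy[OF uniform_Pent])

lemma uniform_Rc: "uniform 3 (Rc j)"
  unfolding Rc_def by (rule uniform_copy[OF uniform_Rfam])

lemma finite_Pc: "finite (Pc j)"
  unfolding Pc_def Pent_eq by simp

lemma finite_Rc: "finite (Rc j)"
  unfolding Rc_def Rfam_eq by simp

lemma Pc_Int_Rc: "P \<in> Pc j \<Longrightarrow> R \<in> Rc j \<Longrightarrow> P \<inter> R \<noteq> {}"
  unfolding Pc_def Rc_def Pent_eq Rfam_eq using pent_edge_Int_rtriple by (auto simp: copy_Int)

lemma Rc_Int_Rc: "R \<in> Rc j \<Longrightarrow> R' \<in> Rc j \<Longrightarrow> R \<inter> R' \<noteq> {}"
  unfolding Rc_def Rfam_eq using rtriple_Int_rtriple by (auto simp: copy_Int)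

lemma avoid_Pc: "avoid (Pc j) Y = avoid Pent (trace j Y)"
  unfolding Pc_def using Pent_subset by (blast intro: avoid_copy)

lemma avoid_Rc: "avoid (Rc j) Y = avoid Rfam (trace j Y)"
  unfolding Rc_def using Rfam_subset by (blast intro: avoid_copy)

abbreviation block :: "nat \<Rightarrow> nat \<Rightarrow> nat set set" where
  "block a b \<equiv> prodfam (Pc a) (Rc b)"

lemma finite_block: "finite (block a b)"
  by (simp add: finite_prodfam finite_Pc finite_Rc)

lemma uniform_block: "a \<noteq> b \<Longrightarrow> uniform 5 (block a b)"
  using uniform_prodfam[OF uniform_Pc uniform_Rc, of a "X a" b "X b"] X_disjoint Pc_subset_X Rc_subset_X
  by simp

lemma avoid_block:
  "a \<noteq> b \<Longrightarrow> avoid (block a b) Y = avoid Pent (trace a Y) * avoid Rfam (trace b Y)"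
  using avoid_prodfam[OF finite_Pc finite_Rc, of a "X a" b "X b"] X_disjoint Pc_subset_X Rc_subset_X
  by (simp add: avoid_Pc avoid_Rc)

lemma block_member: "H \<in> block a b \<Longrightarrow> H \<subseteq> X a \<union> X b \<and> H \<inter> X a \<noteq> {}"
proof -
  assume "H \<in> block a b"
  then obtain P R where "H = P \<union> R" "P \<in> Pc a" "R \<in> Rc b" unfolding prodfam_def by blast
  moreover from \<open>P \<in> Pc a\<close> have "P \<noteq> {}" using uniform_Pc by (force simp: uniform_def)
  ultimately show ?thesis using Pc_subset_X Rc_subset_X by blast
qed

lemma finite_Hfam: "finite Hfam"
  unfolding Hfam_def by (simp add: finite_block)

lemma uniform_Hfam: "uniform 5 Hfam"
  using uniform_block[of 0 1] uniform_block[of 1 2] uniform_block[of 2 0]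
  unfolding Hfam_def uniform_def by auto

lemma blocks_disjoint: "X a \<inter> X a' = {} \<Longrightarrow> X a \<inter> X b' = {} \<Longrightarrow> block a b \<inter> block a' b' = {}"
  using block_member[of _ a b] block_member[of _ a' b'] by blast

lemma block_members_meet:
  assumes "H \<in> block a b" "H' \<in> block a' b'" "b = b' \<or> b = a' \<or> b' = a"
  shows "H \<inter> H' \<noteq> {}"
proof (rule prodfam_members_meet[OF assms(1,2)])
  from assms(3)
  show "(\<forall>R\<in>Rc b. \<forall>R'\<in>Rc b'. R \<inter> R' \<noteq> {}) \<or> (\<forall>P'\<in>Pc a'. \<forall>R\<in>Rc b. P' \<inter> R \<noteq> {})
      \<or> (\<forall>P\<in>Pc a. \<forall>R'\<in>Rc b'. P \<inter> R' \<noteq> {})"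
  proof (elim disjE)
    assume "b = b'"
    then show ?thesis using Rc_Int_Rc by blast
  next
    assume "b = a'"
    then show ?thesis using Pc_Int_Rc by blast
  next
    assume "b' = a"
    then show ?thesis using Pc_Int_Rc by blast
  qed
qed

lemma intersecting_Hfam: "intersecting Hfam"
  unfolding intersecting_def Hfam_def
  using block_members_meet[of _ 0 1 _ 0 1] block_members_meet[of _ 0 1 _ 1 2]
    block_members_meet[of _ 0 1 _ 2 0] block_members_meet[of _ 1 2 _ 0 1]
    block_members_meet[of _ 1 2 _ 1 2] block_members_meet[of _ 1 2 _ 2 0]
    block_members_meet[of _ 2 0 _ 0 1] block_members_meet[of _ 2 0 _ 1 2]
    block_members_meet[of _ 2 0 _ 2 0]
  by auto

lemma avoid_Hfam:
  "avoid Hfam Y = avoid Pent (trace 0 Y) * avoid Rfam (trace 1 Y)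
     + avoid Pent (trace 1 Y) * avoid Rfam (trace 2 Y) + avoid Pent (trace 2 Y) * avoid Rfam (trace 0 Y)"
proof -
  have "block 0 1 \<inter> block 1 2 = {}" "block 2 0 \<inter> block 0 1 = {}" "block 1 2 \<inter> block 2 0 = {}"
    by (simp_all add: blocks_disjoint X_disjoint)
  then have "block 0 1 \<inter> block 1 2 = {}" "(block 0 1 \<union> block 1 2) \<inter> block 2 0 = {}"
    by blast+
  then show ?thesis
    unfolding Hfam_def by (simp add: avoid_Un_disjoint finite_block avoid_block)
qed

lemma card_Hfam: "card Hfam = 75"
  using avoid_Hfam[of "{}"] by (simp add: trace_def card_Pent card_Rfam)

definition profiles :: "(nat \<times> nat \<times> nat) set" where
  "profiles = {(0, 5, 5), (1, 3, 2), (2, 2, 0), (2, 1, 1), (3, 1, 0), (3, 0, 0), (4, 0, 0), (5, 0, 0)}"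

lemma card_filter_lessThan_5:
  "card {i \<in> {..<5::nat}. Q i} = (if Q 0 then 1 else 0) + (if Q 1 then 1 else 0)
     + (if Q 2 then 1 else 0) + (if Q 3 then 1 else 0) + (if Q 4 then 1 else 0)"
proof -
  have "card {i \<in> {..<5::nat}. Q i} = (\<Sum>i<5. if Q i then 1 else 0)"
    by (simp add: sum.If_cases Int_def)
  then show ?thesis by (simp add: lessThan_nat_numeral)
qed

lemma profile_in_profiles:
  assumes "B \<subseteq> {..<5}"
  shows "(card B, avoid Pent B, avoid Rfam B) \<in> profiles"
proof -
  from assms have "B = {i \<in> {..<5}. i \<in> B}" by blast
  then have "card B = card {i \<in> {..<5}. i \<in> B}" by simp
  moreover have "avoid Pent B = card {i \<in> {..<5}. pent_edge i \<inter> B = {}}"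
    unfolding Pent_eq by (rule avoid_image[OF inj_on_pent_edge])
  moreover have "avoid Rfam B = card {i \<in> {..<5}. rtriple i \<inter> B = {}}"
    unfolding Rfam_eq by (rule avoid_image[OF inj_on_rtriple])
  ultimately show ?thesis
    unfolding card_filter_lessThan_5
    by (cases "0 \<in> B"; cases "1 \<in> B"; cases "2 \<in> B"; cases "3 \<in> B"; cases "4 \<in> B")
       (simp_all add: pent_edge_def rtriple_def profiles_def numeral_2_eq_2)
qed

lemma profiles_weight_ge_6:
  assumes "(b\<^sub>0, p\<^sub>0, r\<^sub>0) \<in> profiles" "(b\<^sub>1, p\<^sub>1, r\<^sub>1) \<in> profiles" "(b\<^sub>2, p\<^sub>2, r\<^sub>2) \<in> profiles"
    and "b\<^sub>0 + b\<^sub>1 + b\<^sub>2 \<le> 4"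
  shows "6 \<le> p\<^sub>0 * r\<^sub>1 + p\<^sub>1 * r\<^sub>2 + p\<^sub>2 * r\<^sub>0"
proof -
  have "\<forall>(b\<^sub>0, p\<^sub>0, r\<^sub>0)\<in>profiles. \<forall>(b\<^sub>1, p\<^sub>1, r\<^sub>1)\<in>profiles. \<forall>(b\<^sub>2, p\<^sub>2, r\<^sub>2)\<in>profiles.
      b\<^sub>0 + b\<^sub>1 + b\<^sub>2 \<le> 4 \<longrightarrow> 6 \<le> p\<^sub>0 * r\<^sub>1 + p\<^sub>1 * r\<^sub>2 + p\<^sub>2 * r\<^sub>0"
    by (simp add: profiles_def)
  with assms show ?thesis by fastforce
qed

lemma avoid_Hfam_ge_6:
  assumes "finite Y" "card Y \<le> 4"
  shows "6 \<le> avoid Hfam Y"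
proof -
  have "trace j Y \<subseteq> {..<5}" for j unfolding trace_def by auto
  then have profile: "(card (trace j Y), avoid Pent (trace j Y), avoid Rfam (trace j Y)) \<in> profiles" for j
    by (rule profile_in_profiles)
  have "card (trace 0 Y) + card (trace 1 Y) + card (trace 2 Y) \<le> 4"
    using card_traces_le[OF assms(1)] assms(2) by linarith
  from profiles_weight_ge_6[OF profile profile profile this] show ?thesis
    unfolding avoid_Hfam .
qed

lemma Hfam_cover: "\<forall>H\<in>Hfam. H \<inter> (copy 0 (pent_edge 0) \<union> copy 1 (rtriple 0)) \<noteq> {}"
proof -
  have edge: "copy 0 (pent_edge 0) \<in> Pc 0" and triple: "copy 1 (rtriple 0) \<in> Rc 1"
    by (simp_all add: Pc_def Pent_eq Rc_def Rfam_eq)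
  have "H \<inter> copy 1 (rtriple 0) \<noteq> {}" if "H \<in> block 0 1 \<union> block 1 2" for H
    using that triple Rc_Int_Rc Pc_Int_Rc unfolding prodfam_def by blast
  moreover have "H \<inter> copy 0 (pent_edge 0) \<noteq> {}" if "H \<in> block 2 0" for H
    using that edge Pc_Int_Rc unfolding prodfam_def by blast
  ultimately show ?thesis unfolding Hfam_def by blast
qed

lemma tau_Hfam: "tau Hfam = 5"
proof (rule tau_eqI)
  let ?S = "copy 0 (pent_edge 0) \<union> copy 1 (rtriple 0)"
  show "finite ?S" "card ?S = 5" by (simp_all add: copy_def pent_edge_def rtriple_def)
  show "\<forall>H\<in>Hfam. H \<inter> ?S \<noteq> {}" by (rule Hfam_cover)
next
  fix S :: "nat set" assume "finite S" "card S < 5"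
  then have "avoid Hfam S \<noteq> 0" using avoid_Hfam_ge_6 by fastforce
  then show "\<exists>H\<in>Hfam. H \<inter> S = {}" by (simp add: avoid_eq_0_iff finite_Hfam)
qed

theorem proposition5p9:
  shows "uniform 5 Hfam \<and> intersecting Hfam \<and> card Hfam = 75
    \<and> (\<forall>Y. Y \<subseteq> X 0 \<union> X 1 \<union> X 2 \<and> card Y = 4 \<longrightarrow> avoid Hfam Y \<ge> 6)
    \<and> tau Hfam = 5
    \<and> m 4 5 \<ge> 6"
proof (intro conjI allI impI)
  show "uniform 5 Hfam" "intersecting Hfam" "card Hfam = 75" "tau Hfam = 5"
    by (fact uniform_Hfam intersecting_Hfam card_Hfam tau_Hfam)+
  show "avoid Hfam Y \<ge> 6" if "Y \<subseteq> X 0 \<union> X 1 \<union> X 2 \<and> card Y = 4" for Y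
    using that by (intro avoid_Hfam_ge_6) (auto intro: card_ge_0_finite)
  have "6 \<le> gamma 4 Hfam"
    by (rule gamma_geI) (simp add: avoid_Hfam_ge_6)
  then have "6 \<le> enat (gamma 4 Hfam)" by (simp add: numeral_eq_enat)
  also have "\<dots> \<le> m 4 5"
    by (rule gamma_le_m[OF finite_Hfam uniform_Hfam intersecting_Hfam tau_Hfam])
  finally show "m 4 5 \<ge> 6" .
qed

end
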